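(* Let $p$ and $q$ be positive integers, let $m_1<m_2<\cdots<m_q$ be positive integers and let $v_1,\dots,v_q$ be positive integers. Let $A_n$ be the number of ways to tile an $n$-board using $v_i$ colours of $(1,p-1;m_i)$-combs for $i=1,\ldots,q$. Define $s_n$ by $s_n=v_1s_{n-m_1}+\cdots+v_qs_{n-m_q}+\delta_{n,0}$ for $n\ge 0$ and $s_n=0$ for $n<0$. Then for all $n\ge0$ and all $r=0,\ldots,p-1$, \[ A_{pn+r}=s_n^{p-r}s_{n+1}^r . \]
   Context: An $n$-board is the strip $[0,n]\times[0,1]$ divided into $n$ unit square cells. A $(w,g;m)$-comb is a tile consisting of a row of $m$ rectangles (teeth) of size $w\times 1$, consecutive teeth separated by a gap of width $g$; the gaps are not part of the tile and may be occupied by other tiles. A tiling of a board is a placement of translated (unrotated) copies of tiles so that the teeth cover the board exactly with no overlaps; tiles of the same shape but different colours are distinguished. $\delta_{i,j}$ equals $1$ if $i=j$ and $0$ otherwise. *)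

theory Defs
  imports Main
begin

text \<open>Cell j of the n-board is the unit square [j,j+1] x [0,1], j < n.
  A (1,p-1;m)-comb placed with its first tooth on cell x covers the cells
  x, x+p, ..., x+(m-1)p (teeth of width 1, gaps of width p-1).\<close>
definition comb_cells :: "nat \<Rightarrow> nat \<Rightarrow> nat \<Rightarrow> nat set" where
  "comb_cells p m x = (\<lambda>k. x + k * p) ` {..<m}"

text \<open>A placed tile is a triple (i, c, x): a comb of kind i (with m i teeth),
  colour c < v i, first tooth on cell x.\<close>
definition placed_cells :: "nat \<Rightarrow> (nat \<Rightarrow> nat) \<Rightarrow> nat \<times> nat \<times> nat \<Rightarrow> nat set" where
  "placed_cells p m t = (case t of (i, c, x) \<Rightarrow> comb_cells p (m i) x)"

definition comb_tilings ::
  "nat \<Rightarrow> nat \<Rightarrow> (nat \<Rightarrow> nat) \<Rightarrow> (nat \<Rightarrow> nat) \<Rightarrow> nat \<Rightarrow> (nat \<times> nat \<times> nat) set set" where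
  "comb_tilings p q m v n =
     {T. finite T \<and>
         (\<forall>(i, c, x) \<in> T. 1 \<le> i \<and> i \<le> q \<and> c < v i) \<and>
         (\<forall>t\<in>T. \<forall>u\<in>T. t \<noteq> u \<longrightarrow> placed_cells p m t \<inter> placed_cells p m u = {}) \<and>
         (\<Union>t\<in>T. placed_cells p m t) = {0..<n}}"

definition num_comb_tilings :: "nat \<Rightarrow> nat \<Rightarrow> (nat \<Rightarrow> nat) \<Rightarrow> (nat \<Rightarrow> nat) \<Rightarrow> nat \<Rightarrow> nat" where
  "num_comb_tilings p q m v n = card (comb_tilings p q m v n)"

end

theory Submission
  imports Defs
begin

text \<open>Since every tooth has width 1 and consecutive teeth are p apart, a comb lives in a single
  residue class mod p, and in it behaves like an ordinary tile of length m. So it suffices to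
  count tilings of a board whose column of residue j has height L j; its count is the product
  of the s (L j). This follows by induction on the total height: the top cell of a nonempty
  column r must be the last tooth of a comb ending exactly there, and removing that comb lowers
  column r by m i, which is the recurrence for s. The board of length p n + r has r columns
  of height n + 1 and p - r of height n.\<close>

definition comb_tilings_on ::
  "nat \<Rightarrow> nat \<Rightarrow> (nat \<Rightarrow> nat) \<Rightarrow> (nat \<Rightarrow> nat) \<Rightarrow> nat set \<Rightarrow> (nat \<times> nat \<times> nat) set set" where
  "comb_tilings_on p q m v S =
     {T. finite T \<and>
         (\<forall>(i, c, x) \<in> T. 1 \<le> i \<and> i \<le> q \<and> c < v i) \<and>
         (\<forall>t\<in>T. \<forall>u\<in>T. t \<noteq> u \<longrightarrow> placed_cells p m t \<inter> placed_cells p m u = {}) \<and>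
         (\<Union>t\<in>T. placed_cells p m t) = S}"

lemma comb_tilings_eq_on: "comb_tilings p q m v n = comb_tilings_on p q m v {0..<n}"
  by (simp add: comb_tilings_def comb_tilings_on_def)

definition comb_placements :: "nat \<Rightarrow> (nat \<Rightarrow> nat) \<Rightarrow> nat set \<Rightarrow> (nat \<times> nat \<times> nat) set" where
  "comb_placements q v S = {(i, c, x). 1 \<le> i \<and> i \<le> q \<and> c < v i \<and> x \<in> S}"

definition covering_placements ::
  "nat \<Rightarrow> nat \<Rightarrow> (nat \<Rightarrow> nat) \<Rightarrow> (nat \<Rightarrow> nat) \<Rightarrow> nat set \<Rightarrow> nat \<Rightarrow> (nat \<times> nat \<times> nat) set" where
  "covering_placements p q m v S b =
     {t \<in> comb_placements q v S. b \<in> placed_cells p m t \<and> placed_cells p m t \<subseteq> S}"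

lemma finite_comb_placements: "finite S \<Longrightarrow> finite (comb_placements q v S)"
proof -
  assume "finite S"
  moreover have "comb_placements q v S \<subseteq> (SIGMA i:{1..q}. {..<v i} \<times> S)"
    by (auto simp: comb_placements_def)
  ultimately show ?thesis by (simp add: finite_subset)
qed

lemma comb_cells_mod_div:
  assumes "0 < p"
  shows "comb_cells p n y = {z. z mod p = y mod p \<and> y div p \<le> z div p \<and> z div p < y div p + n}"
proof safe
  fix z assume "z \<in> comb_cells p n y"
  then obtain k where "k < n" "z = y + k * p" by (auto simp: comb_cells_def)
  then show "z mod p = y mod p" "y div p \<le> z div p" "z div p < y div p + n"
    using assms by auto
next
  fix z assume z: "z mod p = y mod p" "y div p \<le> z div p" "z div p < y div p + n"
  have "z div p = y div p + (z div p - y div p)" using z(2) by simp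
  then have "z = y + (z div p - y div p) * p"
    using z(1) div_mult_mod_eq[of z p] div_mult_mod_eq[of y p]
    by (metis add.commute add.left_commute distrib_right)
  moreover have "z div p - y div p < n" using z by auto
  ultimately show "z \<in> comb_cells p n y" unfolding comb_cells_def by blast
qed

text \<open>Cell y lies in column y mod p at height y div p; column j has height L j.\<close>
definition column_board :: "nat \<Rightarrow> (nat \<Rightarrow> nat) \<Rightarrow> nat set" where
  "column_board p L = {y. y div p < L (y mod p)}"

lemma finite_column_board:
  assumes "0 < p"
  shows "finite (column_board p L)"
proof -
  have "column_board p L \<subseteq> {..<p * (\<Sum>j<p. L j)}"
  proof
    fix y assume "y \<in> column_board p L"
    moreover have "L (y mod p) \<le> (\<Sum>j<p. L j)"
      using assms by (intro member_le_sum) auto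
    ultimately have "y div p < (\<Sum>j<p. L j)" by (simp add: column_board_def)
    then show "y \<in> {..<p * (\<Sum>j<p. L j)}"
      using assms by (simp add: div_less_iff_less_mult mult.commute)
  qed
  then show ?thesis using finite_subset by blast
qed

lemma column_board_Diff_top_comb:
  assumes "0 < p" "r < p" "k \<le> L r"
  shows "column_board p L - comb_cells p k (r + p * (L r - k)) = column_board p (L(r := L r - k))"
  using assms by (auto simp: column_board_def comb_cells_mod_div)

lemma column_board_interval:
  assumes "r < p"
  shows "column_board p (\<lambda>j. if j < r then n + 1 else n) = {0..<p * n + r}"
proof -
  have key: "p * d + e < p * n + r \<longleftrightarrow> d < (if e < r then n + 1 else n)" if "e < p" for d e
  proof (cases "d < n")
    case True
    then have "p * d + p \<le> p * n" by (metis mult_Suc_right mult_le_mono2 Suc_leI add.commute)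
    then show ?thesis using True \<open>e < p\<close> by auto
  next
    case False
    then have "p * n \<le> p * d" by simp
    moreover have "n + 1 \<le> d \<Longrightarrow> p * n + p \<le> p * d"
      by (metis add.commute mult_Suc_right mult_le_mono2 Suc_eq_plus1)
    ultimately show ?thesis using False \<open>r < p\<close> by (cases "d = n") auto
  qed
  show ?thesis
  proof (rule set_eqI)
    fix y
    have "y mod p < p" using assms by simp
    then show "y \<in> column_board p (\<lambda>j. if j < r then n + 1 else n) \<longleftrightarrow> y \<in> {0..<p * n + r}"
      using key[of "y mod p" "y div p"] by (simp add: column_board_def)
  qed
qed

context
  fixes p q :: nat and m v :: "nat \<Rightarrow> nat"
  assumes m_pos: "\<And>i. 1 \<le> i \<Longrightarrow> i \<le> q \<Longrightarrow> m i > 0"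
begin

lemma comb_tilings_on_subset_placements:
  assumes "T \<in> comb_tilings_on p q m v S"
  shows "T \<subseteq> comb_placements q v S"
proof
  fix t assume "t \<in> T"
  moreover obtain i c x where t: "t = (i, c, x)" by (cases t)
  ultimately have "1 \<le> i" "i \<le> q" "c < v i" and cells: "placed_cells p m t \<subseteq> S"
    using assms unfolding comb_tilings_on_def by auto
  moreover have "x \<in> placed_cells p m t"
    using m_pos[OF \<open>1 \<le> i\<close> \<open>i \<le> q\<close>] t by (force simp: placed_cells_def comb_cells_def)
  ultimately show "t \<in> comb_placements q v S" using t by (auto simp: comb_placements_def)
qed

lemma finite_comb_tilings_on: "finite S \<Longrightarrow> finite (comb_tilings_on p q m v S)"
  by (meson Pow_iff comb_tilings_on_subset_placements finite_Pow_iff finite_comb_placements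
      rev_finite_subset subsetI)

lemma comb_tilings_on_empty: "comb_tilings_on p q m v {} = {{}}"
proof -
  have "T = {}" if "T \<in> comb_tilings_on p q m v {}" for T
    using comb_tilings_on_subset_placements[OF that] by (auto simp: comb_placements_def)
  then show ?thesis by (auto simp: comb_tilings_on_def)
qed

lemma insert_comb_tilings_on:
  assumes "t \<in> comb_placements q v S" "placed_cells p m t \<subseteq> S"
    and "T \<in> comb_tilings_on p q m v (S - placed_cells p m t)"
  shows "insert t T \<in> comb_tilings_on p q m v S"
proof -
  have "\<forall>u\<in>T. placed_cells p m u \<subseteq> S - placed_cells p m t"
    using assms(3) unfolding comb_tilings_on_def by blast
  then show ?thesis using assms unfolding comb_tilings_on_def comb_placements_def by auto
qed

lemma Diff_comb_tilings_on:
  assumes T: "T \<in> comb_tilings_on p q m v S" and "t \<in> T"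
  shows "T - {t} \<in> comb_tilings_on p q m v (S - placed_cells p m t)"
proof -
  have "(\<Union>u\<in>T - {t}. placed_cells p m u) = S - placed_cells p m t"
    using T \<open>t \<in> T\<close> unfolding comb_tilings_on_def by blast
  then show ?thesis using T unfolding comb_tilings_on_def by auto
qed

lemma comb_tilings_on_eq_UN_covering:
  assumes "b \<in> S"
  shows "comb_tilings_on p q m v S =
    (\<Union>t\<in>covering_placements p q m v S b. insert t ` comb_tilings_on p q m v (S - placed_cells p m t))"
proof
  show "comb_tilings_on p q m v S \<subseteq>
    (\<Union>t\<in>covering_placements p q m v S b. insert t ` comb_tilings_on p q m v (S - placed_cells p m t))"
  proof
    fix T assume T: "T \<in> comb_tilings_on p q m v S"
    then obtain t where t: "t \<in> T" "b \<in> placed_cells p m t"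
      using assms unfolding comb_tilings_on_def by blast
    then have "t \<in> covering_placements p q m v S b"
      using T comb_tilings_on_subset_placements[OF T]
      unfolding covering_placements_def comb_tilings_on_def by blast
    moreover have "T = insert t (T - {t})" using t by blast
    ultimately show "T \<in> (\<Union>t\<in>covering_placements p q m v S b.
        insert t ` comb_tilings_on p q m v (S - placed_cells p m t))"
      using Diff_comb_tilings_on[OF T t(1)] by blast
  qed
qed (use insert_comb_tilings_on in \<open>auto simp: covering_placements_def\<close>)

lemma card_comb_tilings_on_split:
  assumes S: "finite S" and "b \<in> S"
  shows "card (comb_tilings_on p q m v S) =
    (\<Sum>t\<in>covering_placements p q m v S b. card (comb_tilings_on p q m v (S - placed_cells p m t)))"
proof -
  let ?E = "covering_placements p q m v S b"
  let ?R = "\<lambda>t. comb_tilings_on p q m v (S - placed_cells p m t)"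
  note tiling_eq = comb_tilings_on_eq_UN_covering[OF \<open>b \<in> S\<close>]
  have E: "finite ?E"
    using finite_comb_placements[OF S] unfolding covering_placements_def by auto
  have disjoint: "insert t ` ?R t \<inter> insert u ` ?R u = {}"
    if "t \<in> ?E" "u \<in> ?E" "t \<noteq> u" for t u
  proof -
    have "\<not> {t, u} \<subseteq> T" if "T \<in> comb_tilings_on p q m v S" for T
      using that \<open>t \<in> ?E\<close> \<open>u \<in> ?E\<close> \<open>t \<noteq> u\<close>
      unfolding comb_tilings_on_def covering_placements_def by blast
    then show ?thesis using tiling_eq that(1,2) by blast
  qed
  have inj: "inj_on (insert t) (?R t)" if "t \<in> ?E" for t
  proof -
    have "t \<notin> T" if "T \<in> ?R t" for T
      using that \<open>t \<in> ?E\<close> unfolding comb_tilings_on_def covering_placements_def by blast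
    then show ?thesis by (meson inj_onI insert_ident)
  qed
  have "card (comb_tilings_on p q m v S) = (\<Sum>t\<in>?E. card (insert t ` ?R t))"
    unfolding tiling_eq using E disjoint S finite_comb_tilings_on
    by (intro card_UN_disjoint) auto
  also have "\<dots> = (\<Sum>t\<in>?E. card (?R t))"
    using inj by (intro sum.cong refl card_image) auto
  finally show ?thesis .
qed

lemma covering_placements_top_cell:
  assumes p: "0 < p" and r: "r < p" "0 < L r"
  shows "covering_placements p q m v (column_board p L) (r + p * (L r - 1)) =
    (\<lambda>(i, c). (i, c, r + p * (L r - m i))) ` (SIGMA i:{i\<in>{1..q}. m i \<le> L r}. {..<v i})"
    (is "?E = ?F")
proof
  let ?b = "r + p * (L r - 1)"
  have b: "?b mod p = r" "?b div p = L r - 1" using r p by auto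
  show "?E \<subseteq> ?F"
  proof
    fix t assume "t \<in> ?E"
    moreover obtain i c y where t: "t = (i, c, y)" by (cases t)
    ultimately have i: "1 \<le> i" "i \<le> q" "c < v i"
      and b_in: "?b \<in> comb_cells p (m i) y" and sub: "comb_cells p (m i) y \<subseteq> column_board p L"
      by (auto simp: covering_placements_def comb_placements_def placed_cells_def)
    have "0 < m i" using m_pos i by auto
    have y: "y mod p = r" "y div p \<le> L r - 1" "L r - 1 < y div p + m i"
      using b_in b by (auto simp: comb_cells_mod_div[OF p])
    have "y + (m i - 1) * p \<in> comb_cells p (m i) y"
      using \<open>0 < m i\<close> by (auto simp: comb_cells_def)
    then have "y div p + (m i - 1) < L r"
      using sub y(1) p by (auto simp: column_board_def)
    then have "y div p = L r - m i" "m i \<le> L r" using y \<open>0 < m i\<close> by linarith+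
    then have "y = r + p * (L r - m i)" using y(1) by (metis div_mult_mod_eq add.commute mult.commute)
    then show "t \<in> ?F" using t i \<open>m i \<le> L r\<close> by force
  qed
  show "?F \<subseteq> ?E"
  proof clarify
    fix i c assume i: "i \<in> {1..q}" "m i \<le> L r" "c < v i"
    let ?x = "r + p * (L r - m i)"
    have x: "?x mod p = r" "?x div p = L r - m i" using r p by auto
    have "0 < m i" using m_pos i by auto
    then show "(i, c, ?x) \<in> ?E"
      using i x b r p
      by (auto simp: covering_placements_def comb_placements_def placed_cells_def
          column_board_def comb_cells_mod_div)
  qed
qed

lemma card_comb_tilings_on_column_board_remove_top:
  assumes p: "0 < p" and r: "r < p" "0 < L r"
  shows "card (comb_tilings_on p q m v (column_board p L)) =
    (\<Sum>i\<in>{i\<in>{1..q}. m i \<le> L r}.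
       v i * card (comb_tilings_on p q m v (column_board p (L(r := L r - m i)))))"
proof -
  let ?A = "{i\<in>{1..q}. m i \<le> L r}"
  have "r + p * (L r - 1) \<in> column_board p L" using r p by (simp add: column_board_def)
  then have "card (comb_tilings_on p q m v (column_board p L)) =
      (\<Sum>t\<in>covering_placements p q m v (column_board p L) (r + p * (L r - 1)).
         card (comb_tilings_on p q m v (column_board p L - placed_cells p m t)))"
    by (rule card_comb_tilings_on_split[OF finite_column_board[OF p]])
  also have "\<dots> = (\<Sum>(i, c)\<in>(SIGMA i:?A. {..<v i}).
      card (comb_tilings_on p q m v (column_board p L - comb_cells p (m i) (r + p * (L r - m i)))))"
    unfolding covering_placements_top_cell[of r L, OF p r]
    by (simp add: sum.reindex inj_on_def placed_cells_def case_prod_beta)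
  also have "\<dots> = (\<Sum>(i, c)\<in>(SIGMA i:?A. {..<v i}).
      card (comb_tilings_on p q m v (column_board p (L(r := L r - m i)))))"
    by (intro sum.cong refl) (auto simp: column_board_Diff_top_comb p r)
  also have "\<dots> = (\<Sum>i\<in>?A. v i * card (comb_tilings_on p q m v (column_board p (L(r := L r - m i)))))"
    by (subst sum.Sigma[symmetric]) auto
  finally show ?thesis .
qed

context
  fixes s :: "int \<Rightarrow> nat"
  assumes p: "0 < p"
    and s_neg: "\<And>k. k < 0 \<Longrightarrow> s k = 0"
    and s_rec: "\<And>k. k \<ge> 0 \<Longrightarrow>
           s k = (\<Sum>i=1..q. v i * s (k - int (m i))) + (if k = 0 then 1 else 0)"
begin

lemma s_zero: "s 0 = 1"
proof -
  have "(\<Sum>i=1..q. v i * s (0 - int (m i))) = 0"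
    using m_pos s_neg by (intro sum.neutral) auto
  then show ?thesis using s_rec[of 0] by simp
qed

lemma card_comb_tilings_on_column_board:
  "card (comb_tilings_on p q m v (column_board p L)) = (\<Prod>j<p. s (int (L j)))"
proof (induction "\<Sum>j<p. L j" arbitrary: L rule: less_induct)
  case less
  show ?case
  proof (cases "\<forall>j<p. L j = 0")
    case True
    then have "column_board p L = {}" using p by (auto simp: column_board_def)
    then show ?thesis using True s_zero comb_tilings_on_empty by simp
  next
    case False
    then obtain r where r: "r < p" "0 < L r" by auto
    define A where "A = {i\<in>{1..q}. m i \<le> L r}"
    define P where "P = (\<Prod>j\<in>{..<p}-{r}. s (int (L j)))"
    have lowered: "card (comb_tilings_on p q m v (column_board p (L(r := L r - m i)))) =
        s (int (L r) - int (m i)) * P" if "i \<in> A" for i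
    proof -
      have "0 < m i" "m i \<le> L r" using that m_pos unfolding A_def by auto
      then have "(\<Sum>j<p. (L(r := L r - m i)) j) < (\<Sum>j<p. L j)"
        using r by (intro sum_strict_mono_ex1) auto
      then have "card (comb_tilings_on p q m v (column_board p (L(r := L r - m i)))) =
          (\<Prod>j<p. s (int ((L(r := L r - m i)) j)))"
        by (rule less)
      also have "\<dots> = s (int (L r) - int (m i)) * P"
        unfolding P_def using r \<open>m i \<le> L r\<close> by (simp add: prod.remove of_nat_diff)
      finally show ?thesis .
    qed
    have "card (comb_tilings_on p q m v (column_board p L)) =
        (\<Sum>i\<in>A. v i * card (comb_tilings_on p q m v (column_board p (L(r := L r - m i)))))"
      unfolding A_def by (rule card_comb_tilings_on_column_board_remove_top[of r L, OF p r])
    also have "\<dots> = (\<Sum>i\<in>A. v i * s (int (L r) - int (m i))) * P"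
      using lowered by (simp add: sum_distrib_right mult.assoc)
    also have "(\<Sum>i\<in>A. v i * s (int (L r) - int (m i))) = (\<Sum>i=1..q. v i * s (int (L r) - int (m i)))"
    proof (rule sum.mono_neutral_left)
      show "\<forall>i\<in>{1..q} - A. v i * s (int (L r) - int (m i)) = 0"
      proof
        fix i assume "i \<in> {1..q} - A"
        then have "int (L r) - int (m i) < 0" unfolding A_def by auto
        then show "v i * s (int (L r) - int (m i)) = 0" by (simp add: s_neg)
      qed
    qed (auto simp: A_def)
    also have "\<dots> = s (int (L r))" using s_rec[of "int (L r)"] r by simp
    also have "s (int (L r)) * P = (\<Prod>j<p. s (int (L j)))"
      unfolding P_def using r by (simp add: prod.remove)
    finally show ?thesis .
  qed
qed

end

end

lemma prod_lessThan_if_less: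
  assumes "r \<le> p"
  shows "(\<Prod>j<p. if j < r then a else b) = a ^ r * (b :: 'a :: comm_monoid_mult) ^ (p - r)"
proof -
  have "{..<p} \<inter> {j. j < r} = {..<r}" "{..<p} \<inter> - {j. j < r} = {r..<p}"
    using assms by auto
  then show ?thesis by (simp add: prod.If_cases)
qed

theorem theorem2:
  fixes p q :: nat and m v :: "nat \<Rightarrow> nat" and s :: "int \<Rightarrow> nat"
  assumes "p > 0" and "q > 0"
    and "\<And>i. 1 \<le> i \<Longrightarrow> i \<le> q \<Longrightarrow> m i > 0"
    and "\<And>i j. 1 \<le> i \<Longrightarrow> i < j \<Longrightarrow> j \<le> q \<Longrightarrow> m i < m j"
    and "\<And>i. 1 \<le> i \<Longrightarrow> i \<le> q \<Longrightarrow> v i > 0"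
    and "\<And>k. k < 0 \<Longrightarrow> s k = 0"
    and "\<And>k. k \<ge> 0 \<Longrightarrow>
           s k = (\<Sum>i=1..q. v i * s (k - int (m i))) + (if k = 0 then 1 else 0)"
  shows "\<forall>n r. r < p \<longrightarrow>
           num_comb_tilings p q m v (p * n + r) = s (int n) ^ (p - r) * s (int n + 1) ^ r"
proof (intro allI impI)
  fix n r :: nat assume "r < p"
  let ?L = "\<lambda>j. if j < r then n + 1 else n"
  have "num_comb_tilings p q m v (p * n + r) = card (comb_tilings_on p q m v (column_board p ?L))"
    unfolding num_comb_tilings_def comb_tilings_eq_on column_board_interval[OF \<open>r < p\<close>] ..
  also have "\<dots> = (\<Prod>j<p. s (int (?L j)))"
    using card_comb_tilings_on_column_board[OF assms(3,1,6,7)] .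
  also have "\<dots> = (\<Prod>j<p. if j < r then s (int n + 1) else s (int n))"
    by (intro prod.cong refl) (simp add: add.commute)
  also have "\<dots> = s (int n) ^ (p - r) * s (int n + 1) ^ r"
    using prod_lessThan_if_less[of r p "s (int n + 1)" "s (int n)"] \<open>r < p\<close> by (simp add: mult.commute)
  finally show "num_comb_tilings p q m v (p * n + r) = s (int n) ^ (p - r) * s (int n + 1) ^ r" .
qed

end
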